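(* Let $g(t)$, $t\in[0,T)$, be the maximal Ricci flow solution on $S^1\times S^3$ starting from a metric $g_0=\phi^2dz^2+a^2\omega^1\otimes\omega^1+b^2\omega^2\otimes\omega^2+c^2\omega^3\otimes\omega^3$ with $a\le b\le c$ at $t=0$. Suppose that at time $t=0$ we have $0<a$ and $1\le \max_s\left(\frac{c}{a}\right)\le\lambda$ for some constant $\lambda\ge1$. Then $1\le \frac{c}{a}\le\lambda$ for all $(z,t)\in S^1\times[0,T)$.
   Context: $S^3=SU(2)$ carries a global left-invariant frame $E_1,E_2,E_3$ with $[E_i,E_j]=-2\epsilon_{ijk}E_k$ and dual coframe $\omega^i$; $z\in S^1=[0,2\pi)$ and $\phi,a,b,c$ are positive smooth $2\pi$-periodic functions. The Ricci flow $\partial_tg=-2\mathrm{Ric}(g)$ preserves this form, with $\phi,a,b,c$ depending on $(z,t)$; $s$ is the arclength coordinate $ds=\phi\,dz$. *)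

theory Defs
  imports "HOL-Analysis.Analysis"
begin

text \<open>Functions of (z,t): f z t, with z the S^1 coordinate (2pi-periodic) and t time.\<close>

definition dz :: "(real \<Rightarrow> real \<Rightarrow> real) \<Rightarrow> real \<Rightarrow> real \<Rightarrow> real" where
  "dz f z t = deriv (\<lambda>y. f y t) z"

definition dt :: "(real \<Rightarrow> real \<Rightarrow> real) \<Rightarrow> real \<Rightarrow> real \<Rightarrow> real" where
  "dt f z t = deriv (\<lambda>s. f z s) t"

definition ds :: "(real \<Rightarrow> real \<Rightarrow> real) \<Rightarrow> (real \<Rightarrow> real \<Rightarrow> real) \<Rightarrow> real \<Rightarrow> real \<Rightarrow> real" where
  "ds \<phi> f z t = dz f z t / \<phi> z t"

definition dss :: "(real \<Rightarrow> real \<Rightarrow> real) \<Rightarrow> (real \<Rightarrow> real \<Rightarrow> real) \<Rightarrow> real \<Rightarrow> real \<Rightarrow> real" where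
  "dss \<phi> f = ds \<phi> (ds \<phi> f)"

text \<open>Regularity of one metric component on S^1 x [0,T) (lifted 2pi-periodically to R).\<close>
definition regular_comp :: "real \<Rightarrow> (real \<Rightarrow> real \<Rightarrow> real) \<Rightarrow> bool" where
  "regular_comp T f \<longleftrightarrow>
     (\<forall>z t. 0 \<le> t \<and> t < T \<longrightarrow> f z t > 0 \<and> f (z + 2 * pi) t = f z t) \<and>
     (\<forall>z t. 0 \<le> t \<and> t < T \<longrightarrow>
        (\<lambda>y. f y t) differentiable (at z) \<and> (\<lambda>y. dz f y t) differentiable (at z)) \<and>
     (\<forall>z t. 0 < t \<and> t < T \<longrightarrow> (\<lambda>s. f z s) differentiable (at t)) \<and>
     continuous_on (UNIV \<times> {0..<T}) (\<lambda>p. f (fst p) (snd p)) \<and>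
     continuous_on (UNIV \<times> {0..<T}) (\<lambda>p. dz f (fst p) (snd p)) \<and>
     continuous_on (UNIV \<times> {0..<T}) (\<lambda>p. dz (dz f) (fst p) (snd p)) \<and>
     continuous_on (UNIV \<times> {0<..<T}) (\<lambda>p. dt f (fst p) (snd p))"

text \<open>Ricci flow dg/dt = -2 Ric(g) for g = phi^2 dz^2 + a^2 w1^2 + b^2 w2^2 + c^2 w3^2
  on S^1 x S^3, [E_i,E_j] = -2 eps_ijk E_k, written in the arclength derivative.\<close>
definition RF_solution ::
  "real \<Rightarrow> (real \<Rightarrow> real \<Rightarrow> real) \<Rightarrow> (real \<Rightarrow> real \<Rightarrow> real) \<Rightarrow>
   (real \<Rightarrow> real \<Rightarrow> real) \<Rightarrow> (real \<Rightarrow> real \<Rightarrow> real) \<Rightarrow> bool" where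
  "RF_solution T \<phi> a b c \<longleftrightarrow>
     regular_comp T \<phi> \<and> regular_comp T a \<and> regular_comp T b \<and> regular_comp T c \<and>
     (\<forall>z t. 0 < t \<and> t < T \<longrightarrow>
        dt a z t = dss \<phi> a z t + ds \<phi> a z t * (ds \<phi> b z t / b z t + ds \<phi> c z t / c z t)
                   + 2 * (((b z t)\<^sup>2 - (c z t)\<^sup>2)\<^sup>2 - (a z t) ^ 4) / (a z t * (b z t)\<^sup>2 * (c z t)\<^sup>2)
                   \<and>
        dt b z t = dss \<phi> b z t + ds \<phi> b z t * (ds \<phi> a z t / a z t + ds \<phi> c z t / c z t)
                   + 2 * (((a z t)\<^sup>2 - (c z t)\<^sup>2)\<^sup>2 - (b z t) ^ 4) / (b z t * (a z t)\<^sup>2 * (c z t)\<^sup>2)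
                   \<and>
        dt c z t = dss \<phi> c z t + ds \<phi> c z t * (ds \<phi> a z t / a z t + ds \<phi> b z t / b z t)
                   + 2 * (((a z t)\<^sup>2 - (b z t)\<^sup>2)\<^sup>2 - (c z t) ^ 4) / (c z t * (a z t)\<^sup>2 * (b z t)\<^sup>2)
                   \<and>
        dt \<phi> z t = \<phi> z t * (dss \<phi> a z t / a z t + dss \<phi> b z t / b z t + dss \<phi> c z t / c z t))"

end

theory Submission
  imports Defs
begin

(* Each of the inequalities a \<le> b, b \<le> c and c \<le> \<lambda> a is propagated by a maximum principle
   for the logarithm ln (y / x) of the ratio of two components.  At a spatial minimum of
   ln (y / x) the diffusion and drift terms of the two evolution equations cancel up to a
   nonnegative second-derivative term, so the time derivative is bounded below by the
   difference of the reaction terms, 4 (x^2 - y^2) (x^2 + y^2 - w^2) / (x^2 y^2 w^2).  This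
   is nonnegative whenever x is the largest component, which settles b \<le> c once a \<le> b is
   known and c \<le> \<lambda> a once b \<le> c is known.  For a \<le> b it is only bounded below by a
   multiple of ln (b / a), with a constant that is uniform on compact time intervals, which
   the maximum principle also accommodates. *)

lemma periodic_shift_int:
  fixes f :: "real \<Rightarrow> 'a"
  assumes "\<And>z. f (z + p) = f z"
  shows "f (x + of_int n * p) = f x"
proof (induction n rule: int_induct[where k = 0])
  case (step1 i)
  then show ?case using assms[of "x + of_int i * p"] by (simp add: algebra_simps)
next
  case (step2 i)
  then show ?case using assms[of "x + of_int (i - 1) * p"] by (simp add: algebra_simps)
qed simp

lemma periodic_representative:
  fixes f :: "real \<Rightarrow> 'a"
  assumes "\<And>z. f (z + p) = f z" and "0 < p"
  obtains y where "y \<in> {0..p}" and "f x = f y"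
proof
  let ?n = "\<lfloor>x / p\<rfloor>"
  have "of_int ?n * p \<le> x" "x < of_int ?n * p + p"
    using floor_divide_lower[OF assms(2), of x] floor_divide_upper[OF assms(2), of x]
    by (simp_all add: algebra_simps)
  then show "x - of_int ?n * p \<in> {0..p}" by simp
  show "f x = f (x - of_int ?n * p)"
    using periodic_shift_int[where f = f, OF assms(1), of "x - of_int ?n * p" ?n] by simp
qed

lemma continuous_on_compact_bounded_above:
  fixes H :: "'a::topological_space \<Rightarrow> real \<Rightarrow> real"
  assumes "continuous_on (S \<times> I) (\<lambda>p. H (fst p) (snd p))" and "compact S" and "compact I"
  obtains B where "\<And>z t. z \<in> S \<Longrightarrow> t \<in> I \<Longrightarrow> H z t \<le> B"
proof -
  have "compact ((\<lambda>p. H (fst p) (snd p)) ` (S \<times> I))"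
    using assms by (intro compact_continuous_image) (auto simp: compact_Times)
  then have "bounded ((\<lambda>p. H (fst p) (snd p)) ` (S \<times> I))"
    by (rule compact_imp_bounded)
  then obtain B where "\<forall>v \<in> (\<lambda>p. H (fst p) (snd p)) ` (S \<times> I). norm v \<le> B"
    by (auto simp: bounded_iff)
  then have "H z t \<le> B" if "z \<in> S" "t \<in> I" for z t
    using that by (force simp: abs_le_iff)
  then show ?thesis using that by blast
qed

lemma periodic_bounded_above:
  fixes H :: "real \<Rightarrow> real \<Rightarrow> real"
  assumes cont: "continuous_on (UNIV \<times> {0..<T}) (\<lambda>q. H (fst q) (snd q))" and "0 < p"
    and per: "\<And>z t. 0 \<le> t \<Longrightarrow> t < T \<Longrightarrow> H (z + p) t = H z t" and "T' < T"
  obtains K where "\<And>z t. 0 \<le> t \<Longrightarrow> t \<le> T' \<Longrightarrow> H z t \<le> K"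
proof -
  have "continuous_on ({0..p} \<times> {0..T'}) (\<lambda>q. H (fst q) (snd q))"
    by (rule continuous_on_subset[OF cont]) (use \<open>T' < T\<close> in auto)
  then obtain K where K: "\<And>z t. z \<in> {0..p} \<Longrightarrow> t \<in> {0..T'} \<Longrightarrow> H z t \<le> K"
    by (rule continuous_on_compact_bounded_above) auto
  have "H z t \<le> K" if t: "0 \<le> t" "t \<le> T'" for z t
  proof -
    have "t < T" using t \<open>T' < T\<close> by simp
    then obtain y where "y \<in> {0..p}" "H z t = H y t"
      using periodic_representative[of "\<lambda>y. H y t" p z, OF per[OF t(1)] \<open>0 < p\<close>] by blast
    then show ?thesis using K t by simp
  qed
  then show ?thesis using that by blast
qed

lemma first_zero_time:
  fixes V :: "'a::topological_space \<Rightarrow> real \<Rightarrow> real"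
  assumes cont: "continuous_on (S \<times> {0..t1}) (\<lambda>p. V (fst p) (snd p))" and "compact S"
    and pos0: "\<And>z. z \<in> S \<Longrightarrow> 0 < V z 0" and "z1 \<in> S" "0 \<le> t1" "V z1 t1 \<le> 0"
  obtains z0 t0 where "z0 \<in> S" "0 < t0" "t0 \<le> t1" "V z0 t0 = 0"
    and "\<And>y. y \<in> S \<Longrightarrow> 0 \<le> V y t0"
    and "\<And>y t. y \<in> S \<Longrightarrow> 0 \<le> t \<Longrightarrow> t < t0 \<Longrightarrow> 0 < V y t"
proof -
  define K where "K = (S \<times> {0..t1}) \<inter> (\<lambda>p. V (fst p) (snd p)) -` {..0}"
  have "closedin (top_of_set (S \<times> {0..t1})) K"
    unfolding K_def by (rule continuous_closedin_preimage[OF cont closed_atMost])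
  then have "compact K" by (rule closedin_compact[OF compact_Times[OF \<open>compact S\<close> compact_Icc]])
  then have "closed (snd ` K)" by (intro compact_imp_closed compact_continuous_image continuous_intros)
  moreover have "(z1, t1) \<in> K" unfolding K_def using assms by simp
  moreover have bdd: "bdd_below (snd ` K)" unfolding K_def by (rule bdd_belowI[of _ 0]) auto
  ultimately have "Inf (snd ` K) \<in> snd ` K" by (intro closed_contains_Inf) auto
  then obtain q where "q \<in> K" and t0: "snd q = Inf (snd ` K)" by (metis imageE)
  define z0 t0 where "z0 = fst q" and "t0 = snd q"
  have z0: "z0 \<in> S" "0 \<le> t0" "t0 \<le> t1" "V z0 t0 \<le> 0"
    using \<open>q \<in> K\<close> unfolding K_def z0_def t0_def by auto
  have before: "0 < V y t" if "y \<in> S" "0 \<le> t" "t < t0" for y t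
  proof (rule ccontr)
    assume "\<not> 0 < V y t"
    with that z0 have "t \<in> snd ` K" unfolding K_def by force
    then have "t0 \<le> t" unfolding t0_def t0 using bdd by (rule cInf_lower)
    with \<open>t < t0\<close> show False by simp
  qed
  have "0 < t0"
    using z0 pos0[of z0] by (cases "t0 = 0") auto
  have at_t0: "0 \<le> V y t0" if "y \<in> S" for y
  proof (rule continuous_ge_on_closure[where S = "{0..<t0}" and f = "V y" and x = t0])
    have "continuous_on {0..t0} (\<lambda>s. (y, s))" by (intro continuous_intros)
    moreover have "(\<lambda>s. (y, s)) ` {0..t0} \<subseteq> S \<times> {0..t1}" using that z0 by auto
    ultimately have "continuous_on {0..t0} (\<lambda>s. V (fst (y, s)) (snd (y, s)))"
      by (rule continuous_on_compose2[OF cont])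
    then show "continuous_on (closure {0..<t0}) (V y)" using \<open>0 < t0\<close> by simp
    show "t0 \<in> closure {0..<t0}" using \<open>0 < t0\<close> by simp
  next
    fix s assume "s \<in> {0..<t0}"
    then show "0 \<le> V y s" using before[OF that, of s] by simp
  qed
  have "V z0 t0 = 0" using at_t0[OF z0(1)] z0(4) by simp
  with z0 \<open>0 < t0\<close> at_t0 before show ?thesis by (intro that)
qed

lemma compact_max_principle:
  fixes W :: "'a::topological_space \<Rightarrow> real \<Rightarrow> real"
  assumes cont: "continuous_on (S \<times> {0..<T}) (\<lambda>p. W (fst p) (snd p))" and "compact S"
    and init: "\<And>z. z \<in> S \<Longrightarrow> 0 \<le> W z 0"
    and diff: "\<And>z t. z \<in> S \<Longrightarrow> 0 < t \<Longrightarrow> t < T \<Longrightarrow> (\<lambda>s. W z s) differentiable (at t)"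
    and at_min: "\<And>T'. T' < T \<Longrightarrow> \<exists>M. \<forall>z\<in>S. \<forall>t. 0 < t \<longrightarrow> t \<le> T' \<longrightarrow> W z t < 0 \<longrightarrow>
                   (\<forall>y\<in>S. W z t \<le> W y t) \<longrightarrow> M * W z t \<le> deriv (\<lambda>s. W z s) t"
    and "z \<in> S" "0 \<le> t" "t < T"
  shows "0 \<le> W z t"
proof (rule ccontr)
  assume "\<not> 0 \<le> W z t"
  then have neg: "W z t < 0" by simp
  with init[OF \<open>z \<in> S\<close>] have "t \<noteq> 0" by auto
  with \<open>0 \<le> t\<close> have "0 < t" by simp
  obtain M where M: "\<And>z s. z \<in> S \<Longrightarrow> 0 < s \<Longrightarrow> s \<le> t \<Longrightarrow> W z s < 0 \<Longrightarrow>
      (\<forall>y\<in>S. W z s \<le> W y s) \<Longrightarrow> M * W z s \<le> deriv (\<lambda>s. W z s) s"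
    using at_min[OF \<open>t < T\<close>] by blast
  define L where "L = \<bar>M\<bar> + 1"
  define e where "e = - W z t / (2 * exp (L * t))"
  have "W z t / (2 * exp (L * t)) < 0" using neg by (intro divide_neg_pos) auto
  then have "0 < e" unfolding e_def by simp
  define V where "V = (\<lambda>z s. W z s + e * exp (L * s))"
  \<comment> \<open>V first vanishes at some (z0, t0), where W(-, t0) has a negative minimum at z0; since
      L > M the hypothesis then forces a positive time derivative of V, although V has
      decreased to 0 from above.\<close>
  have V_cont: "continuous_on (S \<times> {0..t}) (\<lambda>p. V (fst p) (snd p))"
    unfolding V_def using \<open>t < T\<close>
    by (intro continuous_intros continuous_on_subset[OF cont]) auto
  have V_pos0: "0 < V y 0" if "y \<in> S" for y
    unfolding V_def using init[OF that] \<open>0 < e\<close> by simp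
  have "V z t \<le> 0" unfolding V_def e_def using neg by simp
  then obtain z0 t0 where z0: "z0 \<in> S" "0 < t0" "t0 \<le> t" "V z0 t0 = 0"
    and at_t0: "\<And>y. y \<in> S \<Longrightarrow> 0 \<le> V y t0"
    and before: "\<And>y s. y \<in> S \<Longrightarrow> 0 \<le> s \<Longrightarrow> s < t0 \<Longrightarrow> 0 < V y s"
    using first_zero_time[OF V_cont \<open>compact S\<close> V_pos0 \<open>z \<in> S\<close> less_imp_le[OF \<open>0 < t\<close>]]
    by blast
  have W0: "W z0 t0 = - e * exp (L * t0)" using z0(4) unfolding V_def by simp
  have "W z0 t0 \<le> W y t0" if "y \<in> S" for y
    using at_t0[OF that] z0(4) unfolding V_def by simp
  moreover have "W z0 t0 < 0" using W0 \<open>0 < e\<close> by simp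
  ultimately have deriv_ge: "M * W z0 t0 \<le> deriv (\<lambda>s. W z0 s) t0"
    using M[OF z0(1-3)] by blast
  have "1 \<le> L - M" unfolding L_def by linarith
  have "0 < e * exp (L * t0)" using \<open>0 < e\<close> by simp
  also have "\<dots> \<le> e * exp (L * t0) * (L - M)"
    using mult_left_mono[OF \<open>1 \<le> L - M\<close>, of "e * exp (L * t0)"] \<open>0 < e\<close> by simp
  also have "\<dots> = M * W z0 t0 + e * (exp (L * t0) * L)"
    unfolding W0 by (simp add: algebra_simps)
  also have "\<dots> \<le> deriv (\<lambda>s. W z0 s) t0 + e * (exp (L * t0) * L)"
    using deriv_ge by simp
  finally have pos: "0 < deriv (\<lambda>s. W z0 s) t0 + e * (exp (L * t0) * L)" .
  have "((\<lambda>s. W z0 s) has_real_derivative deriv (\<lambda>s. W z0 s) t0) (at t0)"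
    using diff[OF z0(1,2)] z0(3) \<open>t < T\<close> DERIV_deriv_iff_real_differentiable by force
  then have "((\<lambda>s. V z0 s) has_real_derivative
      deriv (\<lambda>s. W z0 s) t0 + e * (exp (L * t0) * L)) (at t0)"
    unfolding V_def by (auto intro!: derivative_eq_intros)
  from DERIV_pos_inc_left[OF this pos] obtain d
    where "0 < d" and d: "\<And>h. 0 < h \<Longrightarrow> h < d \<Longrightarrow> V z0 (t0 - h) < V z0 t0" by blast
  define h where "h = min (d / 2) t0"
  have "0 < h" "h < d" "h \<le> t0" unfolding h_def using \<open>0 < d\<close> z0(2) by auto
  then have "V z0 (t0 - h) < 0" using d[of h] z0(4) by simp
  moreover have "0 < V z0 (t0 - h)" using before[OF z0(1)] \<open>0 < h\<close> \<open>h \<le> t0\<close> by simp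
  ultimately show False by simp
qed

lemma periodic_max_principle:
  fixes W :: "real \<Rightarrow> real \<Rightarrow> real"
  assumes cont: "continuous_on (UNIV \<times> {0..<T}) (\<lambda>q. W (fst q) (snd q))" and "0 < p"
    and per: "\<And>z t. 0 \<le> t \<Longrightarrow> t < T \<Longrightarrow> W (z + p) t = W z t"
    and init: "\<And>z. 0 \<le> W z 0"
    and diff: "\<And>z t. 0 < t \<Longrightarrow> t < T \<Longrightarrow> (\<lambda>s. W z s) differentiable (at t)"
    and at_min: "\<And>T'. T' < T \<Longrightarrow> \<exists>M. \<forall>z t. 0 < t \<longrightarrow> t \<le> T' \<longrightarrow> W z t < 0 \<longrightarrow>
                   (\<forall>y. W z t \<le> W y t) \<longrightarrow> M * W z t \<le> deriv (\<lambda>s. W z s) t"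
    and "0 \<le> t" "t < T"
  shows "0 \<le> W z t"
proof -
  have rep: "\<exists>y\<in>{0..p}. W x s = W y s" if "0 \<le> s" "s < T" for x s
    using periodic_representative[of "\<lambda>z. W z s" p x, OF per[OF that] \<open>0 < p\<close>] by blast
  have "0 \<le> W y t" if "y \<in> {0..p}" for y
  proof (rule compact_max_principle[where S = "{0..p}" and T = T and W = W])
    show "continuous_on ({0..p} \<times> {0..<T}) (\<lambda>q. W (fst q) (snd q))"
      by (rule continuous_on_subset[OF cont]) auto
    fix T' assume "T' < T"
    then obtain M where M: "\<forall>z t. 0 < t \<longrightarrow> t \<le> T' \<longrightarrow> W z t < 0 \<longrightarrow>
        (\<forall>y. W z t \<le> W y t) \<longrightarrow> M * W z t \<le> deriv (\<lambda>s. W z s) t"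
      using at_min by blast
    have "W z s \<le> W x s"
      if min: "\<forall>y\<in>{0..p}. W z s \<le> W y s" and s: "0 < s" "s \<le> T'" for z s x
    proof -
      obtain y where "y \<in> {0..p}" "W x s = W y s" using rep[of s x] s \<open>T' < T\<close> by auto
      with min show ?thesis by simp
    qed
    with M show "\<exists>M. \<forall>z\<in>{0..p}. \<forall>s. 0 < s \<longrightarrow> s \<le> T' \<longrightarrow> W z s < 0 \<longrightarrow>
        (\<forall>y\<in>{0..p}. W z s \<le> W y s) \<longrightarrow> M * W z s \<le> deriv (\<lambda>s. W z s) s"
      by blast
  qed (use init diff \<open>0 \<le> t\<close> \<open>t < T\<close> that in simp_all)
  then show ?thesis using rep[OF \<open>0 \<le> t\<close> \<open>t < T\<close>, of z] by auto
qed

lemma second_deriv_nonneg_at_min: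
  fixes g g' :: "real \<Rightarrow> real"
  assumes g': "\<And>y. (g has_real_derivative g' y) (at y)"
    and g'': "(g' has_real_derivative g'') (at z)"
    and min: "\<And>y. g z \<le> g y"
  shows "g' z = 0" and "0 \<le> g''"
proof -
  show "g' z = 0"
    by (rule DERIV_local_min[OF g'[of z], of 1]) (use min in auto)
  show "0 \<le> g''"
  proof (rule ccontr)
    assume "\<not> 0 \<le> g''"
    from DERIV_neg_dec_right[OF g''] this obtain d where "0 < d"
      and d: "\<And>h. 0 < h \<Longrightarrow> h < d \<Longrightarrow> g' (z + h) < g' z" by force
    obtain \<xi> where "z < \<xi>" "\<xi> < z + d / 2" and mvt: "g (z + d / 2) - g z = d / 2 * g' \<xi>"
      using MVT2[of z "z + d / 2" g g'] g' \<open>0 < d\<close> by auto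
    have "g' \<xi> < 0" using d[of "\<xi> - z"] \<open>g' z = 0\<close> \<open>z < \<xi>\<close> \<open>\<xi> < z + d / 2\<close> by auto
    then have "d / 2 * g' \<xi> < 0" using \<open>0 < d\<close> by (simp add: mult_pos_neg)
    with mvt min[of "z + d / 2"] show False by linarith
  qed
qed

lemma has_real_derivative_dz:
  "(\<lambda>y. f y t) differentiable (at z) \<Longrightarrow> ((\<lambda>y. f y t) has_real_derivative dz f z t) (at z)"
  unfolding dz_def by (simp add: DERIV_deriv_iff_real_differentiable)

lemma has_real_derivative_dt:
  "(\<lambda>s. f z s) differentiable (at t) \<Longrightarrow> ((\<lambda>s. f z s) has_real_derivative dt f z t) (at t)"
  unfolding dt_def by (simp add: DERIV_deriv_iff_real_differentiable)

lemma dss_eq_dz: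
  assumes "\<phi> z t \<noteq> 0" and "(\<lambda>y. \<phi> y t) differentiable (at z)"
    and "(\<lambda>y. dz f y t) differentiable (at z)"
  shows "dss \<phi> f z t = (dz (dz f) z t * \<phi> z t - dz f z t * dz \<phi> z t) / (\<phi> z t) ^ 3"
proof -
  have "((\<lambda>y. dz f y t / \<phi> y t) has_real_derivative
      (dz (dz f) z t * \<phi> z t - dz f z t * dz \<phi> z t) / (\<phi> z t * \<phi> z t)) (at z)"
    using assms by (intro DERIV_divide has_real_derivative_dz[of "dz f"] has_real_derivative_dz)
  then have "dz (ds \<phi> f) z t = (dz (dz f) z t * \<phi> z t - dz f z t * dz \<phi> z t) / (\<phi> z t * \<phi> z t)"
    unfolding dz_def[of "ds \<phi> f"] ds_def by (rule DERIV_imp_deriv)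
  then show ?thesis unfolding dss_def ds_def[of \<phi> "ds \<phi> f"] by (simp add: power3_eq_cube)
qed

lemma deriv_log_ratio:
  fixes x y :: "real \<Rightarrow> real"
  assumes "(x has_real_derivative x') (at t)" "(y has_real_derivative y') (at t)" "0 < x t" "0 < y t"
  shows "((\<lambda>s. K + ln (y s) - ln (x s)) has_real_derivative y' / y t - x' / x t) (at t)"
  using assms by (auto intro!: derivative_eq_intros simp: field_simps)

(* x_i, y_i stand for the i-th z-derivatives of two components and p, p1 for \<phi> and its
   z-derivative; the left side is the non-reaction part of (dt y) / y - (dt x) / x. *)
lemma log_ratio_diffusion_identity:
  fixes x0 x1 x2 y0 y1 y2 p p1 Q :: real
  assumes "0 < x0" "0 < y0" "0 < p" "x1 * y0 = y1 * x0"
  shows "((y2 * p - y1 * p1) / p ^ 3 + y1 / p * (x1 / p / x0 + Q)) / y0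
       - ((x2 * p - x1 * p1) / p ^ 3 + x1 / p * (y1 / p / y0 + Q)) / x0
       = ((y2 * y0 - y1\<^sup>2) / y0\<^sup>2 - (x2 * x0 - x1\<^sup>2) / x0\<^sup>2) / p\<^sup>2"
proof -
  have "y1 = x1 * y0 / x0" using assms by (simp add: field_simps)
  then show ?thesis using assms by (simp add: field_simps power2_eq_square power3_eq_cube)
qed

lemma log_ratio_deriv_ge_at_spatial_min:
  fixes \<phi> x y :: "real \<Rightarrow> real \<Rightarrow> real"
  assumes pos: "\<And>u. 0 < x u t" "\<And>u. 0 < y u t" "0 < \<phi> z t"
    and dz_x: "\<And>u. (\<lambda>v. x v t) differentiable (at u)" "\<And>u. (\<lambda>v. dz x v t) differentiable (at u)"
    and dz_y: "\<And>u. (\<lambda>v. y v t) differentiable (at u)" "\<And>u. (\<lambda>v. dz y v t) differentiable (at u)"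
    and dz_\<phi>: "(\<lambda>v. \<phi> v t) differentiable (at z)"
    and dt_x: "(\<lambda>s. x z s) differentiable (at t)" and dt_y: "(\<lambda>s. y z s) differentiable (at t)"
    and eq_x: "dt x z t = dss \<phi> x z t + ds \<phi> x z t * (ds \<phi> y z t / y z t + Q) + Rx"
    and eq_y: "dt y z t = dss \<phi> y z t + ds \<phi> y z t * (ds \<phi> x z t / x z t + Q) + Ry"
    and min: "\<And>u. ln (y z t) - ln (x z t) \<le> ln (y u t) - ln (x u t)"
  shows "Ry / y z t - Rx / x z t \<le> deriv (\<lambda>s. K + ln (y z s) - ln (x z s)) t"
proof -
  define g' where "g' u = dz y u t / y u t - dz x u t / x u t" for u
  define g'' where "g'' = (dz (dz y) z t * y z t - (dz y z t)\<^sup>2) / (y z t)\<^sup>2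
                        - (dz (dz x) z t * x z t - (dz x z t)\<^sup>2) / (x z t)\<^sup>2"
  have "((\<lambda>u. 0 + ln (y u t) - ln (x u t)) has_real_derivative g' u) (at u)" for u
    unfolding g'_def using pos dz_x dz_y by (intro deriv_log_ratio has_real_derivative_dz)
  moreover have "(g' has_real_derivative g'') (at z)"
  proof -
    have quotient: "((\<lambda>u. dz f u t / f u t) has_real_derivative
        (dz (dz f) z t * f z t - (dz f z t)\<^sup>2) / (f z t)\<^sup>2) (at z)"
      if "f z t \<noteq> 0" "(\<lambda>v. f v t) differentiable (at z)" "(\<lambda>v. dz f v t) differentiable (at z)"
      for f :: "real \<Rightarrow> real \<Rightarrow> real"
      using DERIV_divide[OF has_real_derivative_dz[of "dz f"] has_real_derivative_dz] that
      by (simp add: power2_eq_square)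
    show ?thesis
      unfolding g'_def g''_def using pos dz_x dz_y
      by (intro DERIV_diff quotient) (auto simp: less_imp_neq[symmetric])
  qed
  ultimately have "g' z = 0" "0 \<le> g''"
    using second_deriv_nonneg_at_min[of "\<lambda>u. 0 + ln (y u t) - ln (x u t)" g' g'' z] min by auto
  have "deriv (\<lambda>s. K + ln (y z s) - ln (x z s)) t = dt y z t / y z t - dt x z t / x z t"
    using pos dt_x dt_y by (intro DERIV_imp_deriv deriv_log_ratio has_real_derivative_dt)
  moreover have "dt y z t / y z t - dt x z t / x z t - (Ry / y z t - Rx / x z t) = g'' / (\<phi> z t)\<^sup>2"
  proof -
    have "dz x z t * y z t = dz y z t * x z t"
      using \<open>g' z = 0\<close> pos(1,2)[of z] unfolding g'_def by (simp add: field_simps)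
    have "\<phi> z t \<noteq> 0" using pos(3) by simp
    have "dt y z t / y z t - dt x z t / x z t - (Ry / y z t - Rx / x z t)
        = (dss \<phi> y z t + ds \<phi> y z t * (ds \<phi> x z t / x z t + Q)) / y z t
        - (dss \<phi> x z t + ds \<phi> x z t * (ds \<phi> y z t / y z t + Q)) / x z t"
      unfolding eq_x eq_y using pos(1,2)[of z] by (simp add: field_simps)
    also have "\<dots> = g'' / (\<phi> z t)\<^sup>2"
      unfolding g''_def dss_eq_dz[of \<phi> z t x, OF \<open>\<phi> z t \<noteq> 0\<close> dz_\<phi> dz_x(2)]
        dss_eq_dz[of \<phi> z t y, OF \<open>\<phi> z t \<noteq> 0\<close> dz_\<phi> dz_y(2)] ds_def
      by (rule log_ratio_diffusion_identity) (use pos \<open>dz x z t * y z t = dz y z t * x z t\<close> in auto)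
    finally show ?thesis .
  qed
  moreover have "0 \<le> g'' / (\<phi> z t)\<^sup>2" using \<open>0 \<le> g''\<close> by simp
  ultimately show ?thesis by linarith
qed

lemma ricci_reaction_difference:
  fixes x y w :: real
  assumes "0 < x" "0 < y" "0 < w"
  shows "2 * ((x\<^sup>2 - w\<^sup>2)\<^sup>2 - y ^ 4) / (y * x\<^sup>2 * w\<^sup>2) / y
       - 2 * ((y\<^sup>2 - w\<^sup>2)\<^sup>2 - x ^ 4) / (x * y\<^sup>2 * w\<^sup>2) / x
       = 4 * (x\<^sup>2 - y\<^sup>2) * (x\<^sup>2 + y\<^sup>2 - w\<^sup>2) / (x\<^sup>2 * y\<^sup>2 * w\<^sup>2)"
proof -
  have "2 * ((x\<^sup>2 - w\<^sup>2)\<^sup>2 - y ^ 4) - 2 * ((y\<^sup>2 - w\<^sup>2)\<^sup>2 - x ^ 4)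
      = 4 * (x\<^sup>2 - y\<^sup>2) * (x\<^sup>2 + y\<^sup>2 - w\<^sup>2)"
    by (simp add: power2_eq_square power4_eq_xxxx algebra_simps)
  with assms show ?thesis by (simp add: power2_eq_square diff_divide_distrib[symmetric] mult_ac)
qed

lemma reaction_lower_bound:
  fixes x y w :: real
  assumes "0 < y" "y \<le> x" "0 < w"
  shows "8 * ((x\<^sup>2 + y\<^sup>2 + w\<^sup>2) / (y\<^sup>2 * w\<^sup>2)) * ln (y / x)
         \<le> 4 * (x\<^sup>2 - y\<^sup>2) * (x\<^sup>2 + y\<^sup>2 - w\<^sup>2) / (x\<^sup>2 * y\<^sup>2 * w\<^sup>2)"
proof -
  define u where "u = ln (y / x)"
  define P where "P = x\<^sup>2 + y\<^sup>2 + w\<^sup>2"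
  have "0 < x" using assms by simp
  have "2 * u = ln ((y / x)\<^sup>2)" unfolding u_def using assms \<open>0 < x\<close> by (simp add: ln_realpow)
  also have "\<dots> \<le> (y / x)\<^sup>2 - 1" using assms \<open>0 < x\<close> by (intro ln_le_minus_one) simp
  finally have "2 * u * x\<^sup>2 \<le> y\<^sup>2 - x\<^sup>2" using \<open>0 < x\<close> by (simp add: field_simps power_divide)
  then have "2 * u * x\<^sup>2 * P \<le> (y\<^sup>2 - x\<^sup>2) * P" by (rule mult_right_mono) (simp add: P_def)
  also have "\<dots> = (x\<^sup>2 - y\<^sup>2) * (- P)" by (simp add: algebra_simps)
  also have "\<dots> \<le> (x\<^sup>2 - y\<^sup>2) * (x\<^sup>2 + y\<^sup>2 - w\<^sup>2)"
  proof (rule mult_left_mono)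
    show "0 \<le> x\<^sup>2 - y\<^sup>2" using assms by (simp add: power_mono)
    show "- P \<le> x\<^sup>2 + y\<^sup>2 - w\<^sup>2" unfolding P_def by simp
  qed
  finally have key: "2 * u * x\<^sup>2 * P \<le> (x\<^sup>2 - y\<^sup>2) * (x\<^sup>2 + y\<^sup>2 - w\<^sup>2)" .
  have "8 * (P / (y\<^sup>2 * w\<^sup>2)) * u = 4 * (2 * u * x\<^sup>2 * P) / (x\<^sup>2 * y\<^sup>2 * w\<^sup>2)"
    using \<open>0 < x\<close> by (simp add: field_simps)
  also have "\<dots> \<le> 4 * ((x\<^sup>2 - y\<^sup>2) * (x\<^sup>2 + y\<^sup>2 - w\<^sup>2)) / (x\<^sup>2 * y\<^sup>2 * w\<^sup>2)"
    using key by (intro divide_right_mono mult_left_mono) auto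
  finally show ?thesis unfolding u_def P_def by (simp only: mult.assoc)
qed

lemma reaction_nonneg:
  fixes x y w :: real
  assumes "0 \<le> y" "y \<le> x" "0 \<le> w" "w \<le> x"
  shows "0 \<le> 4 * (x\<^sup>2 - y\<^sup>2) * (x\<^sup>2 + y\<^sup>2 - w\<^sup>2) / (x\<^sup>2 * y\<^sup>2 * w\<^sup>2)"
proof -
  have "y\<^sup>2 \<le> x\<^sup>2" "w\<^sup>2 \<le> x\<^sup>2" using assms by (auto intro: power_mono)
  moreover have "0 \<le> y\<^sup>2" by simp
  ultimately have "0 \<le> x\<^sup>2 - y\<^sup>2" "0 \<le> x\<^sup>2 + y\<^sup>2 - w\<^sup>2" by linarith+
  then show ?thesis by (intro divide_nonneg_nonneg mult_nonneg_nonneg) simp_all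
qed

lemma regular_compD:
  assumes "regular_comp T f"
  shows "\<And>z t. 0 \<le> t \<Longrightarrow> t < T \<Longrightarrow> 0 < f z t"
    and "\<And>z t. 0 \<le> t \<Longrightarrow> t < T \<Longrightarrow> f (z + 2 * pi) t = f z t"
    and "\<And>z t. 0 \<le> t \<Longrightarrow> t < T \<Longrightarrow> (\<lambda>y. f y t) differentiable (at z)"
    and "\<And>z t. 0 \<le> t \<Longrightarrow> t < T \<Longrightarrow> (\<lambda>y. dz f y t) differentiable (at z)"
    and "\<And>z t. 0 < t \<Longrightarrow> t < T \<Longrightarrow> (\<lambda>s. f z s) differentiable (at t)"
    and "continuous_on (UNIV \<times> {0..<T}) (\<lambda>p. f (fst p) (snd p))"
  using assms unfolding regular_comp_def by auto

lemma RF_solution_rotate: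
  assumes "RF_solution T \<phi> a b c"
  shows "RF_solution T \<phi> b c a"
  using assms unfolding RF_solution_def by (simp add: power2_commute ac_simps)

lemma RF_solution_log_ratio_deriv_at_min:
  assumes RF: "RF_solution T \<phi> a b c" and "0 < t" "t < T"
    and min: "\<And>u. ln (b z t) - ln (a z t) \<le> ln (b u t) - ln (a u t)"
  shows "4 * ((a z t)\<^sup>2 - (b z t)\<^sup>2) * ((a z t)\<^sup>2 + (b z t)\<^sup>2 - (c z t)\<^sup>2)
           / ((a z t)\<^sup>2 * (b z t)\<^sup>2 * (c z t)\<^sup>2)
         \<le> deriv (\<lambda>s. K + ln (b z s) - ln (a z s)) t"
proof -
  have reg: "regular_comp T \<phi>" "regular_comp T a" "regular_comp T b" "regular_comp T c"
    using RF unfolding RF_solution_def by auto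
  note P = regular_compD[OF reg(1)] and A = regular_compD[OF reg(2)]
    and B = regular_compD[OF reg(3)] and C = regular_compD[OF reg(4)]
  have eqs: "dt a z t = dss \<phi> a z t + ds \<phi> a z t * (ds \<phi> b z t / b z t + ds \<phi> c z t / c z t)
                 + 2 * (((b z t)\<^sup>2 - (c z t)\<^sup>2)\<^sup>2 - (a z t) ^ 4) / (a z t * (b z t)\<^sup>2 * (c z t)\<^sup>2)"
    "dt b z t = dss \<phi> b z t + ds \<phi> b z t * (ds \<phi> a z t / a z t + ds \<phi> c z t / c z t)
                 + 2 * (((a z t)\<^sup>2 - (c z t)\<^sup>2)\<^sup>2 - (b z t) ^ 4) / (b z t * (a z t)\<^sup>2 * (c z t)\<^sup>2)"
    using RF \<open>0 < t\<close> \<open>t < T\<close> unfolding RF_solution_def by blast+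
  have pos: "0 < a z t" "0 < b z t" "0 < c z t" using A(1) B(1) C(1) \<open>0 < t\<close> \<open>t < T\<close> by auto
  have "2 * (((a z t)\<^sup>2 - (c z t)\<^sup>2)\<^sup>2 - (b z t) ^ 4) / (b z t * (a z t)\<^sup>2 * (c z t)\<^sup>2) / b z t
      - 2 * (((b z t)\<^sup>2 - (c z t)\<^sup>2)\<^sup>2 - (a z t) ^ 4) / (a z t * (b z t)\<^sup>2 * (c z t)\<^sup>2) / a z t
      \<le> deriv (\<lambda>s. K + ln (b z s) - ln (a z s)) t"
    using \<open>0 < t\<close> \<open>t < T\<close> min eqs
    by (intro log_ratio_deriv_ge_at_spatial_min[where Q = "ds \<phi> c z t / c z t"])
       (auto intro: A B P)
  then show ?thesis by (simp only: ricci_reaction_difference[OF pos])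
qed

lemma RF_solution_ratio_bound_preserved:
  assumes RF: "RF_solution T \<phi> a b c" and "0 < k"
    and init: "\<And>z. a z 0 \<le> k * b z 0"
    and reaction: "\<And>T'. T' < T \<Longrightarrow> \<exists>M. \<forall>z t. 0 < t \<longrightarrow> t \<le> T' \<longrightarrow> k * b z t < a z t \<longrightarrow>
          M * ln (k * b z t / a z t)
          \<le> 4 * ((a z t)\<^sup>2 - (b z t)\<^sup>2) * ((a z t)\<^sup>2 + (b z t)\<^sup>2 - (c z t)\<^sup>2)
              / ((a z t)\<^sup>2 * (b z t)\<^sup>2 * (c z t)\<^sup>2)"
    and "0 \<le> t" "t < T"
  shows "a z t \<le> k * b z t"
proof -
  have reg: "regular_comp T a" "regular_comp T b" using RF unfolding RF_solution_def by auto
  note A = regular_compD[OF reg(1)] and B = regular_compD[OF reg(2)]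
  define W where "W z t = ln k + ln (b z t) - ln (a z t)" for z t
  have W_ln: "W z t = ln (k * b z t / a z t)" if "0 \<le> t" "t < T" for z t
    unfolding W_def using A(1)[OF that, of z] B(1)[OF that, of z] \<open>0 < k\<close>
    by (simp add: ln_div ln_mult)
  have W_nonneg_iff: "0 \<le> W z t \<longleftrightarrow> a z t \<le> k * b z t" if "0 \<le> t" "t < T" for z t
    unfolding W_ln[OF that] using A(1)[OF that, of z] B(1)[OF that, of z] \<open>0 < k\<close>
    by (simp add: pos_le_divide_eq)
  have "0 < T" using \<open>0 \<le> t\<close> \<open>t < T\<close> by simp
  have "0 \<le> W z t"
  proof (rule periodic_max_principle[where W = W and p = "2 * pi" and T = T])
    show "continuous_on (UNIV \<times> {0..<T}) (\<lambda>p. W (fst p) (snd p))"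
      unfolding W_def using A(1) B(1)
      by (intro continuous_intros A(6) B(6)) (auto simp: less_imp_neq[symmetric])
    show "W (z + 2 * pi) t = W z t" if "0 \<le> t" "t < T" for z t
      unfolding W_def using A(2) B(2) that by simp
    show "0 \<le> W z 0" for z
      using W_nonneg_iff[of 0 z] init[of z] \<open>0 < T\<close> by simp
    show "(\<lambda>s. W z s) differentiable (at t)" if "0 < t" "t < T" for z t
    proof -
      have "((\<lambda>s. W z s) has_real_derivative dt b z t / b z t - dt a z t / a z t) (at t)"
        unfolding W_def using that
        by (intro deriv_log_ratio has_real_derivative_dt A(5) B(5) A(1) B(1)) auto
      then show ?thesis using real_differentiable_def by blast
    qed
    fix T' assume "T' < T"
    then obtain M where M: "\<And>z t. 0 < t \<Longrightarrow> t \<le> T' \<Longrightarrow> k * b z t < a z t \<Longrightarrow>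
        M * ln (k * b z t / a z t)
        \<le> 4 * ((a z t)\<^sup>2 - (b z t)\<^sup>2) * ((a z t)\<^sup>2 + (b z t)\<^sup>2 - (c z t)\<^sup>2)
            / ((a z t)\<^sup>2 * (b z t)\<^sup>2 * (c z t)\<^sup>2)"
      using reaction by blast
    have "M * W z s \<le> deriv (\<lambda>s. W z s) s"
      if "0 < s" "s \<le> T'" and neg: "W z s < 0" and min: "\<forall>y. W z s \<le> W y s" for z s
    proof -
      have s: "0 \<le> s" "s < T" using that \<open>T' < T\<close> by auto
      have "k * b z s < a z s" using W_nonneg_iff[OF s, of z] neg by simp
      with M[OF \<open>0 < s\<close> \<open>s \<le> T'\<close>] have "M * W z s
          \<le> 4 * ((a z s)\<^sup>2 - (b z s)\<^sup>2) * ((a z s)\<^sup>2 + (b z s)\<^sup>2 - (c z s)\<^sup>2)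
            / ((a z s)\<^sup>2 * (b z s)\<^sup>2 * (c z s)\<^sup>2)"
        unfolding W_ln[OF s] by blast
      also have "\<dots> \<le> deriv (\<lambda>s. W z s) s"
        using min \<open>0 < s\<close> \<open>s < T\<close> unfolding W_def
        by (intro RF_solution_log_ratio_deriv_at_min[OF RF]) auto
      finally show ?thesis .
    qed
    then show "\<exists>M. \<forall>z s. 0 < s \<longrightarrow> s \<le> T' \<longrightarrow> W z s < 0 \<longrightarrow>
        (\<forall>y. W z s \<le> W y s) \<longrightarrow> M * W z s \<le> deriv (\<lambda>s. W z s) s"
      by blast
  qed (use \<open>0 \<le> t\<close> \<open>t < T\<close> in simp_all)
  then show ?thesis using W_nonneg_iff \<open>0 \<le> t\<close> \<open>t < T\<close> by blast
qed

lemma RF_solution_preserves_a_le_b: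
  assumes RF: "RF_solution T \<phi> a b c" and init: "\<And>z. a z 0 \<le> b z 0" and "0 \<le> t" "t < T"
  shows "a z t \<le> b z t"
proof -
  have reg: "regular_comp T a" "regular_comp T b" "regular_comp T c"
    using RF unfolding RF_solution_def by auto
  note A = regular_compD[OF reg(1)] and B = regular_compD[OF reg(2)] and C = regular_compD[OF reg(3)]
  have "a z t \<le> 1 * b z t"
  proof (rule RF_solution_ratio_bound_preserved[OF RF])
    fix T' assume "T' < T"
    define H where "H z s = ((a z s)\<^sup>2 + (b z s)\<^sup>2 + (c z s)\<^sup>2) / ((b z s)\<^sup>2 * (c z s)\<^sup>2)" for z s
    have "continuous_on (UNIV \<times> {0..<T}) (\<lambda>p. H (fst p) (snd p))"
      unfolding H_def using B(1) C(1)
      by (intro continuous_intros A(6) B(6) C(6)) (auto simp: less_imp_neq[symmetric])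
    moreover have "H (z + 2 * pi) s = H z s" if "0 \<le> s" "s < T" for z s
      unfolding H_def using that by (simp add: A(2) B(2) C(2))
    ultimately obtain K where H_le: "\<And>z s. 0 \<le> s \<Longrightarrow> s \<le> T' \<Longrightarrow> H z s \<le> K"
      using periodic_bounded_above[of T H "2 * pi" T'] \<open>T' < T\<close> by auto
    show "\<exists>M. \<forall>z s. 0 < s \<longrightarrow> s \<le> T' \<longrightarrow> 1 * b z s < a z s \<longrightarrow>
        M * ln (1 * b z s / a z s)
        \<le> 4 * ((a z s)\<^sup>2 - (b z s)\<^sup>2) * ((a z s)\<^sup>2 + (b z s)\<^sup>2 - (c z s)\<^sup>2)
            / ((a z s)\<^sup>2 * (b z s)\<^sup>2 * (c z s)\<^sup>2)"
    proof (intro exI[of _ "8 * K"] allI impI)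
      fix z s assume s: "0 < s" "s \<le> T'" and "1 * b z s < a z s"
      have "0 \<le> s" "s < T" using s \<open>T' < T\<close> by auto
      then have pos: "0 < a z s" "0 < b z s" "0 < c z s" by (simp_all add: A(1) B(1) C(1))
      then have "ln (b z s / a z s) < 0" using \<open>1 * b z s < a z s\<close> by simp
      then have "8 * K * ln (1 * b z s / a z s) \<le> 8 * H z s * ln (b z s / a z s)"
        using H_le[of s z] s by (simp add: mult_right_mono_neg)
      also have "\<dots> \<le> 4 * ((a z s)\<^sup>2 - (b z s)\<^sup>2) * ((a z s)\<^sup>2 + (b z s)\<^sup>2 - (c z s)\<^sup>2)
            / ((a z s)\<^sup>2 * (b z s)\<^sup>2 * (c z s)\<^sup>2)"
        unfolding H_def using pos \<open>1 * b z s < a z s\<close> by (intro reaction_lower_bound) auto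
      finally show "8 * K * ln (1 * b z s / a z s)
          \<le> 4 * ((a z s)\<^sup>2 - (b z s)\<^sup>2) * ((a z s)\<^sup>2 + (b z s)\<^sup>2 - (c z s)\<^sup>2)
            / ((a z s)\<^sup>2 * (b z s)\<^sup>2 * (c z s)\<^sup>2)" .
    qed
  qed (use init \<open>0 \<le> t\<close> \<open>t < T\<close> in simp_all)
  then show ?thesis by simp
qed

lemma RF_solution_preserves_b_le_c:
  assumes RF: "RF_solution T \<phi> a b c" and ab: "\<And>z t. 0 \<le> t \<Longrightarrow> t < T \<Longrightarrow> a z t \<le> b z t"
    and init: "\<And>z. b z 0 \<le> c z 0" and "0 \<le> t" "t < T"
  shows "b z t \<le> c z t"
proof -
  have reg: "regular_comp T a" "regular_comp T c" using RF unfolding RF_solution_def by auto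
  have "b z t \<le> 1 * c z t"
  proof (rule RF_solution_ratio_bound_preserved[OF RF_solution_rotate[OF RF]])
    fix T' assume "T' < T"
    have "0 \<le> 4 * ((b z s)\<^sup>2 - (c z s)\<^sup>2) * ((b z s)\<^sup>2 + (c z s)\<^sup>2 - (a z s)\<^sup>2)
            / ((b z s)\<^sup>2 * (c z s)\<^sup>2 * (a z s)\<^sup>2)"
      if "0 < s" "s \<le> T'" "1 * c z s < b z s" for z s
    proof -
      have "0 \<le> s" "s < T" using that \<open>T' < T\<close> by auto
      then have "0 < a z s" "0 < c z s" "a z s \<le> b z s"
        by (simp_all add: regular_compD(1)[OF reg(1)] regular_compD(1)[OF reg(2)] ab)
      then show ?thesis using \<open>1 * c z s < b z s\<close> by (intro reaction_nonneg) simp_all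
    qed
    then show "\<exists>M. \<forall>z s. 0 < s \<longrightarrow> s \<le> T' \<longrightarrow> 1 * c z s < b z s \<longrightarrow>
        M * ln (1 * c z s / b z s)
        \<le> 4 * ((b z s)\<^sup>2 - (c z s)\<^sup>2) * ((b z s)\<^sup>2 + (c z s)\<^sup>2 - (a z s)\<^sup>2)
            / ((b z s)\<^sup>2 * (c z s)\<^sup>2 * (a z s)\<^sup>2)"
      by (intro exI[of _ 0]) simp
  qed (use init \<open>0 \<le> t\<close> \<open>t < T\<close> in simp_all)
  then show ?thesis by simp
qed

lemma RF_solution_preserves_c_le_scaled_a:
  assumes RF: "RF_solution T \<phi> a b c" and bc: "\<And>z t. 0 \<le> t \<Longrightarrow> t < T \<Longrightarrow> b z t \<le> c z t"
    and "1 \<le> k" and init: "\<And>z. c z 0 \<le> k * a z 0" and "0 \<le> t" "t < T"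
  shows "c z t \<le> k * a z t"
proof (rule RF_solution_ratio_bound_preserved[OF RF_solution_rotate[OF RF_solution_rotate[OF RF]]])
  have reg: "regular_comp T a" "regular_comp T b" using RF unfolding RF_solution_def by auto
  fix T' assume "T' < T"
  have "0 \<le> 4 * ((c z s)\<^sup>2 - (a z s)\<^sup>2) * ((c z s)\<^sup>2 + (a z s)\<^sup>2 - (b z s)\<^sup>2)
          / ((c z s)\<^sup>2 * (a z s)\<^sup>2 * (b z s)\<^sup>2)"
    if "0 < s" "s \<le> T'" "k * a z s < c z s" for z s
  proof -
    have "0 \<le> s" "s < T" using that \<open>T' < T\<close> by auto
    then have "0 < a z s" "0 < b z s" "b z s \<le> c z s"
      by (simp_all add: regular_compD(1)[OF reg(1)] regular_compD(1)[OF reg(2)] bc)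
    moreover have "a z s \<le> k * a z s" using \<open>0 < a z s\<close> \<open>1 \<le> k\<close> by simp
    then have "a z s \<le> c z s" using \<open>k * a z s < c z s\<close> by linarith
    ultimately show ?thesis by (intro reaction_nonneg) simp_all
  qed
  then show "\<exists>M. \<forall>z s. 0 < s \<longrightarrow> s \<le> T' \<longrightarrow> k * a z s < c z s \<longrightarrow>
      M * ln (k * a z s / c z s)
      \<le> 4 * ((c z s)\<^sup>2 - (a z s)\<^sup>2) * ((c z s)\<^sup>2 + (a z s)\<^sup>2 - (b z s)\<^sup>2)
          / ((c z s)\<^sup>2 * (a z s)\<^sup>2 * (b z s)\<^sup>2)"
    by (intro exI[of _ 0]) simp
qed (use \<open>0 \<le> t\<close> \<open>t < T\<close> init \<open>1 \<le> k\<close> in simp_all)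

theorem lemma3p2:
  fixes \<phi> a b c :: "real \<Rightarrow> real \<Rightarrow> real" and T lam :: real
  assumes "T > 0"
    and "RF_solution T \<phi> a b c"
    and "\<forall>z. a z 0 \<le> b z 0 \<and> b z 0 \<le> c z 0"
    and "lam \<ge> 1"
    and "\<forall>z. 0 < a z 0"
    and "\<exists>z. 1 \<le> c z 0 / a z 0"
    and "\<forall>z. c z 0 / a z 0 \<le> lam"
  shows "\<forall>z t. 0 \<le> t \<and> t < T \<longrightarrow> 1 \<le> c z t / a z t \<and> c z t / a z t \<le> lam"
proof (intro allI impI)
  fix z t assume t: "0 \<le> t \<and> t < T"
  have a_pos: "0 < a y s" if "0 \<le> s" "s < T" for y s
    using assms(2) that unfolding RF_solution_def by (blast dest: regular_compD(1))
  have ab: "a y s \<le> b y s" if "0 \<le> s" "s < T" for y s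
    using RF_solution_preserves_a_le_b[OF assms(2)] assms(3) that by blast
  have bc: "b y s \<le> c y s" if "0 \<le> s" "s < T" for y s
    using RF_solution_preserves_b_le_c[OF assms(2) ab] assms(3) that by blast
  have "c z 0 \<le> lam * a z 0" for z
    using assms(5,7) by (simp add: divide_le_eq)
  then have "c z t \<le> lam * a z t"
    using RF_solution_preserves_c_le_scaled_a[OF assms(2) bc assms(4)] t by blast
  moreover have "a z t \<le> c z t" using ab[of t z] bc[of t z] t by simp
  ultimately show "1 \<le> c z t / a z t \<and> c z t / a z t \<le> lam"
    using a_pos[of t z] t by (simp add: divide_le_eq)
qed

end
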